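(* In the endogenous-network setting described in the context, let $(\delta,\xi)$ be an equilibrium of the endogenous friend game that involves at least two degrees. Then $\delta$ is nondecreasing on $S$, and for every $\theta\in S$ with $\delta(\theta)>0$, $$\xi(\theta)>x^{friend}_{\perp}(\theta,\delta(\theta))>x^{soc}_{end}(\theta,\delta(\theta))=x^{soc}_{\perp}(\theta,\delta(\theta)).$$
   Context: Fix an integer $n\ge2$, parameters $a>0$, $\phi\in\mathbb{R}$, $c>a(n-1)$ and $k>a(n-1)$. Agents' types are i.i.d. draws from an atomless probability distribution $F$ with compact support $S\subset[0,\infty)$; $\mathrm{E}$ denotes expectation with $\theta\sim F$. A symmetric pure-strategy profile is a pair of measurable functions $\delta:S\to\{0,1,\dots,n-1\}$ (degree choice) and bounded $\xi:S\to[0,\infty)$ (action choice) with $\mathrm{E}[\delta(\theta)]>0$; for bounded measurable $h$ on $S$ write $\widetilde{\mathrm{E}}[h(\theta)]=\mathrm{E}[\delta(\theta)h(\theta)]/\mathrm{E}[\delta(\theta)]$ (expectation over a neighbor). The profile is an equilibrium of the endogenous friend game if for every $\theta\in S$, the pair $(\delta(\theta),\xi(\theta))$ maximizes over $(d',y)\in\{0,\dots,n-1\}\times[0,\infty)$ the payoff $\theta y+a\,y\,d'\,\widetilde{\mathrm{E}}[\xi(\theta_j)]-\frac{c}{2}y^2-\phi(n-1)\mathrm{E}[\xi(\theta_j)]-\frac{k}{2}d'^2$. It involves at least two degrees if $\delta(\theta)$ takes at least two distinct values, each with positive $F$-probability. Comparison games: for a probability distribution $Q$ on $S\times\{0,\dots,n-1\}$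 of a pair $(\theta,D)$ with $\mathrm{E}_Q[D]>0$, let $\widetilde{\mathrm{E}}_Q[h(\theta,D)]=\mathrm{E}_Q[D\,h(\theta,D)]/\mathrm{E}_Q[D]$. A bounded measurable $z:S\times\{0,\dots,n-1\}\to[0,\infty)$ is an equilibrium of the friend game for $Q$ if for every $(\theta,d)$, $z(\theta,d)$ maximizes $\theta y+a\,y\,d\,\widetilde{\mathrm{E}}_Q[z(\theta',D')]-\frac{c}{2}y^2$ over $y\ge0$; it is an equilibrium of the society-wide game for $Q$ if the same holds with $\mathrm{E}_Q$ in place of $\widetilde{\mathrm{E}}_Q$. Since $c>a(n-1)$, each such game has a unique equilibrium. Let $Q_{end}$ be the law of $(\theta,\delta(\theta))$ with $\theta\sim F$, and $Q_\perp$ the product of $F$ and the law of $\delta(\theta)$. Then $x^{friend}_\perp$ is the equilibrium of the friend game for $Q_\perp$, and $x^{soc}_{end}$, $x^{soc}_\perp$ are the equilibria of the society-wide game for $Q_{end}$ and $Q_\perp$ respectively. *)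

theory Defs
  imports "HOL-Probability.Probability"
begin

definition measure_support :: "real measure \<Rightarrow> real set" where
  "measure_support F = {x. \<forall>U. open U \<and> x \<in> U \<longrightarrow> emeasure F U > 0}"

definition nbr_exp :: "real measure \<Rightarrow> (real \<Rightarrow> nat) \<Rightarrow> (real \<Rightarrow> real) \<Rightarrow> real" where
  "nbr_exp F \<delta> h = (\<integral>\<theta>. real (\<delta> \<theta>) * h \<theta> \<partial>F) / (\<integral>\<theta>. real (\<delta> \<theta>) \<partial>F)"

definition endo_payoff ::
  "nat \<Rightarrow> real \<Rightarrow> real \<Rightarrow> real \<Rightarrow> real \<Rightarrow> real measure \<Rightarrow> (real \<Rightarrow> nat) \<Rightarrow> (real \<Rightarrow> real)
     \<Rightarrow> real \<Rightarrow> nat \<Rightarrow> real \<Rightarrow> real" where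
  "endo_payoff n a c k \<phi> F \<delta> \<xi> \<theta> d y =
     \<theta> * y + a * y * real d * nbr_exp F \<delta> \<xi> - c / 2 * y\<^sup>2
     - \<phi> * (real n - 1) * (\<integral>\<theta>'. \<xi> \<theta>' \<partial>F) - k / 2 * (real d)\<^sup>2"

text \<open>Symmetric pure-strategy equilibrium of the endogenous friend game
  (strategies are functions on S; values outside S are irrelevant).\<close>
definition endo_friend_eq ::
  "nat \<Rightarrow> real \<Rightarrow> real \<Rightarrow> real \<Rightarrow> real \<Rightarrow> real measure \<Rightarrow> real set \<Rightarrow> (real \<Rightarrow> nat) \<Rightarrow> (real \<Rightarrow> real) \<Rightarrow> bool" where
  "endo_friend_eq n a c k \<phi> F S \<delta> \<xi> \<longleftrightarrow>
     \<delta> \<in> measurable F (count_space UNIV) \<and> \<xi> \<in> borel_measurable F \<and>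
     (\<forall>\<theta>\<in>S. \<delta> \<theta> \<le> n - 1) \<and> (\<forall>\<theta>\<in>S. 0 \<le> \<xi> \<theta>) \<and> (\<exists>B. \<forall>\<theta>\<in>S. \<xi> \<theta> \<le> B) \<and>
     (\<integral>\<theta>. real (\<delta> \<theta>) \<partial>F) > 0 \<and>
     (\<forall>\<theta>\<in>S. \<forall>d'. \<forall>y. d' \<le> n - 1 \<and> 0 \<le> y \<longrightarrow>
        endo_payoff n a c k \<phi> F \<delta> \<xi> \<theta> d' y \<le> endo_payoff n a c k \<phi> F \<delta> \<xi> \<theta> (\<delta> \<theta>) (\<xi> \<theta>))"

definition two_degrees :: "real measure \<Rightarrow> (real \<Rightarrow> nat) \<Rightarrow> bool" where
  "two_degrees F \<delta> \<longleftrightarrow> (\<exists>d1 d2. d1 \<noteq> d2 \<and>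
      measure F {\<theta> \<in> space F. \<delta> \<theta> = d1} > 0 \<and> measure F {\<theta> \<in> space F. \<delta> \<theta> = d2} > 0)"

definition Q_end :: "real measure \<Rightarrow> (real \<Rightarrow> nat) \<Rightarrow> (real \<times> nat) measure" where
  "Q_end F \<delta> = distr F (borel \<Otimes>\<^sub>M count_space UNIV) (\<lambda>\<theta>. (\<theta>, \<delta> \<theta>))"

definition Q_perp :: "real measure \<Rightarrow> (real \<Rightarrow> nat) \<Rightarrow> (real \<times> nat) measure" where
  "Q_perp F \<delta> = F \<Otimes>\<^sub>M distr F (count_space UNIV) \<delta>"

definition Q_exp :: "(real \<times> nat) measure \<Rightarrow> (real \<times> nat \<Rightarrow> real) \<Rightarrow> real" where
  "Q_exp Q h = (\<integral>p. h p \<partial>Q)"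

definition Q_nbr_exp :: "(real \<times> nat) measure \<Rightarrow> (real \<times> nat \<Rightarrow> real) \<Rightarrow> real" where
  "Q_nbr_exp Q h = (\<integral>p. real (snd p) * h p \<partial>Q) / (\<integral>p. real (snd p) \<partial>Q)"

definition comp_eq ::
  "nat \<Rightarrow> real \<Rightarrow> real \<Rightarrow> real set \<Rightarrow> (real \<times> nat) measure \<Rightarrow> ((real \<times> nat \<Rightarrow> real) \<Rightarrow> real)
     \<Rightarrow> (real \<Rightarrow> nat \<Rightarrow> real) \<Rightarrow> bool" where
  "comp_eq n a c S Q G z \<longleftrightarrow>
     (\<lambda>p. z (fst p) (snd p)) \<in> borel_measurable Q \<and>
     (\<exists>B. \<forall>\<theta>\<in>S. \<forall>d\<le>n - 1. \<bar>z \<theta> d\<bar> \<le> B) \<and>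
     (\<forall>\<theta>\<in>S. \<forall>d\<le>n - 1. 0 \<le> z \<theta> d) \<and>
     (\<forall>\<theta>\<in>S. \<forall>d\<le>n - 1. \<forall>y\<ge>0.
        \<theta> * y + a * y * real d * G (\<lambda>p. z (fst p) (snd p)) - c / 2 * y\<^sup>2
        \<le> \<theta> * z \<theta> d + a * z \<theta> d * real d * G (\<lambda>p. z (fst p) (snd p)) - c / 2 * (z \<theta> d)\<^sup>2)"

definition friend_eq where
  "friend_eq n a c S Q z \<longleftrightarrow> comp_eq n a c S Q (Q_nbr_exp Q) z"

definition soc_eq where
  "soc_eq n a c S Q z \<longleftrightarrow> comp_eq n a c S Q (Q_exp Q) z"

end

theory Submission
  imports Defs
begin

text \<open>Given the neighbour action \<open>m\<close>, the equilibrium action is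
  \<open>\<xi>(\<theta>) = (\<theta> + a \<delta>(\<theta>) m) / c\<close>, and the resulting value of degree \<open>d\<close>,
  \<open>(\<theta> + a d m)\<^sup>2 / (2c) - k d\<^sup>2 / 2\<close>, has increasing differences in \<open>(\<theta>, d)\<close> once
  \<open>m > 0\<close>; hence \<open>\<delta>\<close> is nondecreasing. Every comparison equilibrium has the same linear
  form \<open>(\<theta> + a d G) / c\<close>, with a scalar aggregate \<open>G\<close> fixed by a linear equation:
  \<open>G = E[\<theta>] / (c - a E[\<delta>])\<close> for both society-wide games (so they agree),
  \<open>G = E[\<theta>] E[\<delta>] / (c E[\<delta>] - a E[\<delta>\<^sup>2])\<close> for the friend game with independent
  degrees, while \<open>m = E[\<delta> \<theta>] / (c E[\<delta>] - a E[\<delta>\<^sup>2])\<close>. The strict inequalities are then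
  \<open>E[\<delta> \<theta>] > E[\<delta>] E[\<theta>]\<close> (a nondecreasing, non-constant degree is positively correlated
  with the atomless type) and \<open>E[\<delta>\<^sup>2] > E[\<delta>]\<^sup>2\<close>.\<close>

lemma quadratic_maximizer_eq:
  fixes b c x :: real
  assumes "0 < c" "0 \<le> b" and max: "\<And>y. 0 \<le> y \<Longrightarrow> b * y - c/2 * y\<^sup>2 \<le> b * x - c/2 * x\<^sup>2"
  shows "x = b / c"
proof -
  have "c/2 * (x - b/c)\<^sup>2 = (b * (b/c) - c/2 * (b/c)\<^sup>2) - (b * x - c/2 * x\<^sup>2)"
    using \<open>0 < c\<close> by (simp add: power2_eq_square field_simps)
  also have "\<dots> \<le> 0"
    using max[of "b/c"] assms(1,2) by simp
  finally show ?thesis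
    using \<open>0 < c\<close> by (simp add: mult_le_0_iff)
qed

lemma AE_in_measure_support:
  assumes sets_F: "sets F = sets borel"
  shows "AE x in F. x \<in> measure_support F"
proof -
  define I where "I = {pq :: rat \<times> rat. emeasure F {of_rat (fst pq) <..< of_rat (snd pq)} = 0}"
  define N where "N = (\<Union>pq\<in>I. {of_rat (fst pq) <..< of_rat (snd pq) :: real})"
  have "N \<in> null_sets F"
    unfolding N_def
  proof (rule null_sets_UN')
    show "countable I" by simp
  qed (simp add: I_def null_sets_def sets_F)
  moreover have "{x \<in> space F. x \<notin> measure_support F} \<subseteq> N"
  proof
    fix x assume "x \<in> {x \<in> space F. x \<notin> measure_support F}"
    then obtain U where U: "open U" "x \<in> U" "emeasure F U = 0"
      by (auto simp: measure_support_def not_gr_zero)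
    obtain e where "e > 0" and e: "\<And>y. dist y x < e \<Longrightarrow> y \<in> U"
      using U(1,2) open_dist by blast
    obtain p where p: "x - e < of_rat p" "of_rat p < x"
      using of_rat_dense[of "x - e" x] \<open>e > 0\<close> by auto
    obtain q where q: "x < of_rat q" "of_rat q < x + e"
      using of_rat_dense[of x "x + e"] \<open>e > 0\<close> by auto
    have "{of_rat p <..< of_rat q} \<subseteq> U"
      using p q by (auto intro!: e simp: dist_real_def)
    moreover have "U \<in> sets F"
      using U(1) sets_F by simp
    ultimately have "emeasure F {of_rat p <..< of_rat q} = 0"
      using U(3) by (metis emeasure_mono le_zero_eq)
    then show "x \<in> N"
      using p q unfolding N_def I_def by force
  qed
  ultimately show ?thesis by (rule AE_I')
qed

lemma (in pair_prob_space) integral_mult_fst_snd: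
  fixes f :: "'a \<Rightarrow> real" and g :: "'b \<Rightarrow> real"
  assumes [measurable]: "f \<in> borel_measurable M1" "g \<in> borel_measurable M2"
    and f_bound: "AE x in M1. \<bar>f x\<bar> \<le> B1" and g_bound: "AE y in M2. \<bar>g y\<bar> \<le> B2"
  shows integrable_mult_fst_snd: "integrable (M1 \<Otimes>\<^sub>M M2) (\<lambda>p. f (fst p) * g (snd p))"
    and "(\<integral>p. f (fst p) * g (snd p) \<partial>(M1 \<Otimes>\<^sub>M M2)) = (\<integral>x. f x \<partial>M1) * (\<integral>y. g y \<partial>M2)"
proof -
  have "AE x in M1. AE y in M2. \<bar>f x * g y\<bar> \<le> B1 * B2"
    using f_bound
  proof eventually_elim
    case (elim x)
    show ?case
      using g_bound by eventually_elim (use elim in \<open>auto simp: abs_mult intro: mult_mono\<close>)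
  qed
  then have "AE p in M1 \<Otimes>\<^sub>M M2. \<bar>f (fst p) * g (snd p)\<bar> \<le> B1 * B2"
    by (subst (asm) AE_pair_iff) measurable
  then show int: "integrable (M1 \<Otimes>\<^sub>M M2) (\<lambda>p. f (fst p) * g (snd p))"
    by (intro P.integrable_const_bound[where B = "B1 * B2"]) auto
  show "(\<integral>p. f (fst p) * g (snd p) \<partial>(M1 \<Otimes>\<^sub>M M2)) = (\<integral>x. f x \<partial>M1) * (\<integral>y. g y \<partial>M2)"
    using integral_fst'[OF int] by simp
qed

lemma two_degrees_not_AE_const:
  assumes "two_degrees F \<delta>" and [measurable]: "\<delta> \<in> measurable F (count_space UNIV)"
  shows "\<not> (AE x in F. real (\<delta> x) = r)"
proof
  assume const: "AE x in F. real (\<delta> x) = r"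
  have null: "measure F {x \<in> space F. \<delta> x = d} = 0" if "real d \<noteq> r" for d
  proof (rule measure_eq_0_null_sets)
    have "AE x in F. x \<notin> {x \<in> space F. \<delta> x = d}"
      using const by eventually_elim (use that in auto)
    then show "{x \<in> space F. \<delta> x = d} \<in> null_sets F"
      by (subst AE_iff_null_sets) measurable
  qed
  obtain d1 d2 where "d1 \<noteq> d2" "measure F {x \<in> space F. \<delta> x = d1} > 0"
    "measure F {x \<in> space F. \<delta> x = d2} > 0"
    using assms(1) unfolding two_degrees_def by blast
  then show False
    using null[of d1] null[of d2] by (cases "real d1 = r") auto
qed

lemma mono_on_crossing_point:
  fixes f :: "real \<Rightarrow> real"
  assumes mono: "mono_on S f" and "bounded S"
  obtains t where "\<And>x. x \<in> S \<Longrightarrow> 0 \<le> (f x - r) * (x - t)"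
proof
  define A where "A = {x \<in> S. f x < r}"
  define t where "t = (if A = {} then Inf S else Sup A)"
  have "bdd_above A" "bdd_below S"
    using \<open>bounded S\<close> by (auto simp: A_def intro: bdd_above_mono bounded_imp_bdd_above bounded_imp_bdd_below)
  fix x assume "x \<in> S"
  consider "f x < r" | "f x = r" | "r < f x" by linarith
  then show "0 \<le> (f x - r) * (x - t)"
  proof cases
    case 1
    then have "x \<le> t"
      using \<open>x \<in> S\<close> cSup_upper[OF _ \<open>bdd_above A\<close>] by (auto simp: A_def t_def)
    with 1 show ?thesis by (intro mult_nonpos_nonpos) auto
  next
    case 3
    have "y \<le> x" if "y \<in> A" for y
      using that 3 mono \<open>x \<in> S\<close> by (force simp: A_def mono_on_def)
    then have "t \<le> x"
      using \<open>x \<in> S\<close> cInf_lower[OF _ \<open>bdd_below S\<close>] by (auto simp: t_def intro: cSup_least)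
    with 3 show ?thesis by simp
  qed simp
qed

lemma (in prob_space) expectation_square_gt:
  fixes f :: "'a \<Rightarrow> real"
  assumes "integrable M f" "integrable M (\<lambda>x. (f x)\<^sup>2)"
    and nonconst: "\<not> (AE x in M. f x = expectation f)"
  shows "(expectation f)\<^sup>2 < expectation (\<lambda>x. (f x)\<^sup>2)"
proof -
  have "integrable M (\<lambda>x. (f x - expectation f)\<^sup>2)"
    using assms(1,2) by (simp add: power2_diff)
  moreover have "variance f \<noteq> 0"
  proof
    assume "variance f = 0"
    with \<open>integrable M (\<lambda>x. (f x - expectation f)\<^sup>2)\<close>
    have "AE x in M. (f x - expectation f)\<^sup>2 = 0"
      by (subst integral_nonneg_eq_0_iff_AE[symmetric]) auto
    then show False
      using nonconst by auto
  qed
  then show ?thesis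
    using variance_positive[of f] variance_eq[OF assms(1,2)] by simp
qed

lemma expectation_mult_gt_of_mono:
  fixes M :: "real measure" and f :: "real \<Rightarrow> real"
  assumes "prob_space M" and AE_S: "AE x in M. x \<in> S" and "bounded S" "mono_on S f"
    and integrable: "integrable M f" "integrable M (\<lambda>x. x)" "integrable M (\<lambda>x. f x * x)"
    and atomless: "\<And>t. AE x in M. x \<noteq> t"
    and nonconst: "\<not> (AE x in M. f x = (\<integral>x. f x \<partial>M))"
  shows "(\<integral>x. f x \<partial>M) * (\<integral>x. x \<partial>M) < (\<integral>x. f x * x \<partial>M)"
proof -
  interpret prob_space M by fact
  define \<mu> where "\<mu> = expectation f"
  obtain t where t: "\<And>x. x \<in> S \<Longrightarrow> 0 \<le> (f x - \<mu>) * (x - t)"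
    using mono_on_crossing_point[OF \<open>mono_on S f\<close> \<open>bounded S\<close>] by blast
  define h where "h = (\<lambda>x. f x * x - t * f x - \<mu> * x + \<mu> * t)"
  have h_eq: "h x = (f x - \<mu>) * (x - t)" for x
    by (simp add: h_def algebra_simps)
  have h_nonneg: "AE x in M. 0 \<le> h x"
    using AE_S by eventually_elim (simp add: h_eq t)
  have "integrable M h"
    using integrable unfolding h_def by auto
  have "expectation h = expectation (\<lambda>x. f x * x) - \<mu> * expectation (\<lambda>x. x)"
    using integrable by (simp add: h_def \<mu>_def prob_space)
  moreover have "expectation h \<noteq> 0"
  proof
    assume "expectation h = 0"
    then have "AE x in M. h x = 0"
      using integral_nonneg_eq_0_iff_AE[OF \<open>integrable M h\<close> h_nonneg] by simp
    then have "AE x in M. f x = \<mu>"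
      using atomless[of t] by eventually_elim (simp add: h_eq)
    then show False
      using nonconst by (simp add: \<mu>_def)
  qed
  moreover have "0 \<le> expectation h"
    using h_nonneg by (rule integral_nonneg_AE)
  ultimately show ?thesis
    by (simp add: \<mu>_def)
qed

lemma comp_eq_closed_form:
  assumes "comp_eq n a c S Q G z" "0 < c" "0 \<le> a" "S \<subseteq> {0..}"
    and "g = G (\<lambda>p. z (fst p) (snd p))" "0 \<le> g" "\<theta> \<in> S" "d \<le> n - 1"
  shows "z \<theta> d = (\<theta> + a * real d * g) / c"
proof (rule quadratic_maximizer_eq)
  show "0 < c" "0 \<le> \<theta> + a * real d * g"
    using assms by auto
  fix y :: real assume "0 \<le> y"
  then have "\<theta> * y + a * y * real d * g - c/2 * y\<^sup>2
      \<le> \<theta> * z \<theta> d + a * z \<theta> d * real d * g - c/2 * (z \<theta> d)\<^sup>2"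
    using assms(1,5,7,8) unfolding comp_eq_def by blast
  then show "(\<theta> + a * real d * g) * y - c/2 * y\<^sup>2 \<le> (\<theta> + a * real d * g) * z \<theta> d - c/2 * (z \<theta> d)\<^sup>2"
    by (simp add: algebra_simps)
qed

locale endo_equilibrium = prob_space F for F :: "real measure" +
  fixes n :: nat and a c k \<phi> :: real and S :: "real set"
    and \<delta> :: "real \<Rightarrow> nat" and \<xi> :: "real \<Rightarrow> real"
  assumes n_ge_2: "2 \<le> n" and a_pos: "0 < a" and c_gt: "a * (real n - 1) < c" and k_pos: "0 < k"
    and sets_F: "sets F = sets borel" and atomless: "\<And>t. measure F {t} = 0"
    and S_support: "S = measure_support F" and compact_S: "compact S" and S_nonneg: "S \<subseteq> {0..}"
    and equilibrium: "endo_friend_eq n a c k \<phi> F S \<delta> \<xi>"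
    and two_degrees: "two_degrees F \<delta>"
begin

abbreviation "mean_deg \<equiv> expectation (\<lambda>\<theta>. real (\<delta> \<theta>))"
abbreviation "mean_deg_sq \<equiv> expectation (\<lambda>\<theta>. (real (\<delta> \<theta>))\<^sup>2)"
abbreviation "mean_type \<equiv> expectation (\<lambda>\<theta>. \<theta>)"
abbreviation "mean_deg_type \<equiv> expectation (\<lambda>\<theta>. real (\<delta> \<theta>) * \<theta>)"
abbreviation "nbr_action \<equiv> nbr_exp F \<delta> \<xi>"

lemma c_pos: "0 < c"
proof -
  have "1 \<le> real n - 1"
    using n_ge_2 by simp
  then have "a \<le> a * (real n - 1)"
    using a_pos by simp
  then show ?thesis
    using a_pos c_gt by linarith
qed

lemma AE_S: "AE \<theta> in F. \<theta> \<in> S"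
  using AE_in_measure_support[OF sets_F] S_support by simp

lemma delta_measurable [measurable]: "\<delta> \<in> measurable F (count_space UNIV)"
  using equilibrium by (simp add: endo_friend_eq_def)

lemma real_delta_measurable [measurable]: "(\<lambda>\<theta>. real (\<delta> \<theta>)) \<in> borel_measurable F"
  using measurable_compose[OF delta_measurable, of real borel] by simp

lemma type_measurable [measurable]: "(\<lambda>\<theta>. \<theta>) \<in> borel_measurable F"
  using measurable_ident_sets[OF sets_F] .

lemma delta_le: "\<theta> \<in> S \<Longrightarrow> \<delta> \<theta> \<le> n - 1"
  using equilibrium by (simp add: endo_friend_eq_def)

lemma real_delta_le:
  assumes "\<theta> \<in> S"
  shows "real (\<delta> \<theta>) \<le> real n - 1"
proof -
  have "real (\<delta> \<theta>) \<le> real (n - 1)"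
    using delta_le[OF assms] by simp
  then show ?thesis
    using n_ge_2 by (simp add: of_nat_diff)
qed

lemma type_bounded:
  obtains B where "\<And>\<theta>. \<theta> \<in> S \<Longrightarrow> \<bar>\<theta>\<bar> \<le> B"
  using compact_imp_bounded[OF compact_S] by (auto simp: bounded_real)

lemma integrable_bounded_on_S:
  fixes h :: "real \<Rightarrow> real"
  assumes "h \<in> borel_measurable F" "\<And>\<theta>. \<theta> \<in> S \<Longrightarrow> \<bar>h \<theta>\<bar> \<le> B"
  shows "integrable F h"
  using AE_S assms by (intro integrable_const_bound[where B = B]) (auto elim: AE_mp)

lemma integrable_moments:
  "integrable F (\<lambda>\<theta>. real (\<delta> \<theta>))" "integrable F (\<lambda>\<theta>. (real (\<delta> \<theta>))\<^sup>2)"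
  "integrable F (\<lambda>\<theta>. \<theta>)" "integrable F (\<lambda>\<theta>. real (\<delta> \<theta>) * \<theta>)"
  "integrable F (\<lambda>\<theta>. real (\<delta> \<theta>) * \<xi> \<theta>)"
proof -
  obtain B where B: "\<And>\<theta>. \<theta> \<in> S \<Longrightarrow> \<bar>\<theta>\<bar> \<le> B"
    using type_bounded by blast
  obtain X where X: "\<And>\<theta>. \<theta> \<in> S \<Longrightarrow> 0 \<le> \<xi> \<theta> \<and> \<xi> \<theta> \<le> X"
    using equilibrium by (auto simp: endo_friend_eq_def)
  have \<xi>_meas: "\<xi> \<in> borel_measurable F"
    using equilibrium by (simp add: endo_friend_eq_def)
  have deg: "\<theta> \<in> S \<Longrightarrow> \<bar>real (\<delta> \<theta>)\<bar> \<le> real n" for \<theta>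
    using real_delta_le by force
  show "integrable F (\<lambda>\<theta>. real (\<delta> \<theta>))"
    by (rule integrable_bounded_on_S[OF _ deg]) measurable
  show "integrable F (\<lambda>\<theta>. \<theta>)"
    by (rule integrable_bounded_on_S[OF _ B]) measurable
  show "integrable F (\<lambda>\<theta>. (real (\<delta> \<theta>))\<^sup>2)"
    using deg by (intro integrable_bounded_on_S[where B = "real n ^ 2"])
      (auto simp: abs_le_square_iff)
  show "integrable F (\<lambda>\<theta>. real (\<delta> \<theta>) * \<theta>)"
    using deg B by (intro integrable_bounded_on_S[where B = "real n * B"])
      (auto simp: abs_mult intro: mult_mono)
  show "integrable F (\<lambda>\<theta>. real (\<delta> \<theta>) * \<xi> \<theta>)"
    using deg X \<xi>_meas by (intro integrable_bounded_on_S[where B = "real n * X"])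
      (auto simp: abs_mult intro: mult_mono)
qed

lemma mean_deg_pos: "0 < mean_deg"
  using equilibrium by (simp add: endo_friend_eq_def)

lemma nbr_action_nonneg: "0 \<le> nbr_action"
proof -
  have "0 \<le> expectation (\<lambda>\<theta>. real (\<delta> \<theta>) * \<xi> \<theta>)"
    using AE_S equilibrium
    by (intro integral_nonneg_AE) (auto simp: endo_friend_eq_def elim!: AE_mp)
  then show ?thesis
    using mean_deg_pos by (simp add: nbr_exp_def)
qed

lemma endo_payoff_eq:
  "endo_payoff n a c k \<phi> F \<delta> \<xi> \<theta> d y =
     (\<theta> + a * real d * nbr_action) * y - c/2 * y\<^sup>2 - k/2 * (real d)\<^sup>2
       - \<phi> * (real n - 1) * expectation \<xi>"
  by (simp add: endo_payoff_def algebra_simps)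

lemma endo_payoff_le:
  "\<theta> \<in> S \<Longrightarrow> d \<le> n - 1 \<Longrightarrow> 0 \<le> y \<Longrightarrow>
    endo_payoff n a c k \<phi> F \<delta> \<xi> \<theta> d y \<le> endo_payoff n a c k \<phi> F \<delta> \<xi> \<theta> (\<delta> \<theta>) (\<xi> \<theta>)"
  using equilibrium by (simp add: endo_friend_eq_def)

lemma best_response_bound: "\<theta> \<in> S \<Longrightarrow> 0 \<le> \<theta> + a * real d * nbr_action"
  using S_nonneg a_pos nbr_action_nonneg by auto

lemma xi_eq: "\<theta> \<in> S \<Longrightarrow> \<xi> \<theta> = (\<theta> + a * real (\<delta> \<theta>) * nbr_action) / c"
  using equilibrium endo_payoff_le[of \<theta> "\<delta> \<theta>"]
  by (intro quadratic_maximizer_eq c_pos best_response_bound)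
    (auto simp: endo_friend_eq_def endo_payoff_eq)

text \<open>Substituting the optimal action turns the payoff of degree \<open>d\<close> into this value.\<close>
lemma degree_value_le:
  assumes "\<theta> \<in> S" "d \<le> n - 1"
  shows "(\<theta> + a * real d * nbr_action)\<^sup>2 / (2*c) - k/2 * (real d)\<^sup>2
    \<le> (\<theta> + a * real (\<delta> \<theta>) * nbr_action)\<^sup>2 / (2*c) - k/2 * (real (\<delta> \<theta>))\<^sup>2"
proof -
  have optimal_payoff: "endo_payoff n a c k \<phi> F \<delta> \<xi> \<theta> d' ((\<theta> + a * real d' * nbr_action) / c)
      = (\<theta> + a * real d' * nbr_action)\<^sup>2 / (2*c) - k/2 * (real d')\<^sup>2
        - \<phi> * (real n - 1) * expectation \<xi>" for d'
    using c_pos by (simp add: endo_payoff_eq field_simps power2_eq_square)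
  show ?thesis
    using endo_payoff_le[OF assms, of "(\<theta> + a * real d * nbr_action) / c"]
      best_response_bound[OF assms(1)] c_pos
    by (simp add: optimal_payoff xi_eq[OF assms(1)] optimal_payoff[of "\<delta> \<theta>", folded xi_eq[OF assms(1)]])
qed

lemma nbr_action_pos: "0 < nbr_action"
proof (rule ccontr)
  assume "\<not> 0 < nbr_action"
  then have "nbr_action = 0"
    using nbr_action_nonneg by simp
  then have "\<delta> \<theta> = 0" if "\<theta> \<in> S" for \<theta>
    using degree_value_le[OF that, of 0] k_pos by (simp add: mult_le_0_iff)
  then have "AE \<theta> in F. real (\<delta> \<theta>) = 0"
    using AE_S by (auto elim: AE_mp)
  then have "mean_deg = 0"
    by (simp add: integral_eq_zero_AE)
  then show False
    using mean_deg_pos by simp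
qed

text \<open>The degree value has increasing differences in \<open>(\<theta>, d)\<close>, with cross term
  \<open>a \<cdot> nbr_action \<cdot> (\<theta>\<^sub>2 - \<theta>\<^sub>1)(d\<^sub>1 - d\<^sub>2) / c\<close>.\<close>
lemma delta_mono: "mono_on S \<delta>"
proof (rule mono_onI, rule ccontr)
  fix \<theta>1 \<theta>2 assume S: "\<theta>1 \<in> S" "\<theta>2 \<in> S" and "\<theta>1 \<le> \<theta>2" "\<not> \<delta> \<theta>1 \<le> \<delta> \<theta>2"
  define d1 d2 where "d1 = real (\<delta> \<theta>1)" and "d2 = real (\<delta> \<theta>2)"
  have "d2 < d1" "\<theta>1 < \<theta>2"
    using \<open>\<theta>1 \<le> \<theta>2\<close> \<open>\<not> \<delta> \<theta>1 \<le> \<delta> \<theta>2\<close> by (auto simp: d1_def d2_def dual_order.order_iff_strict)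
  have "(\<theta>1 + a * d2 * nbr_action)\<^sup>2 / (2*c) - k/2 * d2\<^sup>2
      \<le> (\<theta>1 + a * d1 * nbr_action)\<^sup>2 / (2*c) - k/2 * d1\<^sup>2"
       "(\<theta>2 + a * d1 * nbr_action)\<^sup>2 / (2*c) - k/2 * d1\<^sup>2
      \<le> (\<theta>2 + a * d2 * nbr_action)\<^sup>2 / (2*c) - k/2 * d2\<^sup>2"
    using degree_value_le[OF S(1), of "\<delta> \<theta>2"] degree_value_le[OF S(2), of "\<delta> \<theta>1"]
      S delta_le by (auto simp: d1_def d2_def)
  moreover have "(\<theta>1 + a * d2 * nbr_action)\<^sup>2 / (2*c) + (\<theta>2 + a * d1 * nbr_action)\<^sup>2 / (2*c)
      - (\<theta>1 + a * d1 * nbr_action)\<^sup>2 / (2*c) - (\<theta>2 + a * d2 * nbr_action)\<^sup>2 / (2*c)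
      = a * nbr_action * ((\<theta>2 - \<theta>1) * (d1 - d2)) / c"
    using c_pos by (simp add: field_simps power2_eq_square)
  moreover have "0 < a * nbr_action * ((\<theta>2 - \<theta>1) * (d1 - d2)) / c"
    using c_pos a_pos nbr_action_pos \<open>d2 < d1\<close> \<open>\<theta>1 < \<theta>2\<close> by simp
  ultimately show False
    by linarith
qed

lemma nbr_action_eq: "nbr_action * (c * mean_deg - a * mean_deg_sq) = mean_deg_type"
proof -
  define g where "g = (\<lambda>\<theta>. 1/c * (real (\<delta> \<theta>) * \<theta>) + a * nbr_action / c * (real (\<delta> \<theta>))\<^sup>2)"
  have "real (\<delta> \<theta>) * \<xi> \<theta> = g \<theta>" if "\<theta> \<in> S" for \<theta>
    unfolding xi_eq[OF that] g_def using c_pos by (simp add: field_simps power2_eq_square)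
  then have "AE \<theta> in F. real (\<delta> \<theta>) * \<xi> \<theta> = g \<theta>"
    using AE_S by (auto elim: AE_mp)
  then have "expectation (\<lambda>\<theta>. real (\<delta> \<theta>) * \<xi> \<theta>) = expectation g"
    using integrable_moments(5) by (intro integral_cong_AE) (auto simp: g_def)
  also have "\<dots> = 1/c * mean_deg_type + a * nbr_action / c * mean_deg_sq"
    using integrable_moments unfolding g_def by simp
  finally show ?thesis
    using c_pos mean_deg_pos by (simp add: nbr_exp_def field_simps)
qed

lemma AE_noteq: "AE \<theta> in F. \<theta> \<noteq> t"
proof -
  have "{t} \<in> null_sets F"
    using atomless[of t] sets_F by (auto simp: emeasure_eq_measure null_sets_def)
  then show ?thesis
    by (rule AE_I') auto
qed

lemma delta_not_AE_const: "\<not> (AE \<theta> in F. real (\<delta> \<theta>) = r)"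
  using two_degrees_not_AE_const[OF two_degrees delta_measurable] .

lemma mean_deg_type_gt: "mean_deg * mean_type < mean_deg_type"
proof (rule expectation_mult_gt_of_mono[OF prob_space_axioms AE_S])
  show "bounded S"
    using compact_S by (rule compact_imp_bounded)
  show "mono_on S (\<lambda>\<theta>. real (\<delta> \<theta>))"
    using delta_mono by (auto simp: mono_on_def)
  show "\<And>t. AE \<theta> in F. \<theta> \<noteq> t"
    by (rule AE_noteq)
qed (fact integrable_moments delta_not_AE_const)+

lemma mean_deg_sq_gt: "mean_deg\<^sup>2 < mean_deg_sq"
  by (rule expectation_square_gt[OF integrable_moments(1,2) delta_not_AE_const])

lemma mean_type_pos: "0 < mean_type"
proof -
  have nonneg: "AE \<theta> in F. 0 \<le> \<theta>"
    using AE_S S_nonneg by (auto elim: AE_mp)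
  have "mean_type \<noteq> 0"
  proof
    assume "mean_type = 0"
    then have "AE \<theta> in F. \<theta> = 0"
      using integral_nonneg_eq_0_iff_AE[OF integrable_moments(3) nonneg] by simp
    then have "AE \<theta> in F. False"
      using AE_noteq[of 0] by eventually_elim simp
    then show False
      by simp
  qed
  moreover have "0 \<le> mean_type"
    using nonneg by (rule integral_nonneg_AE)
  ultimately show ?thesis
    by simp
qed

lemma mean_deg_le: "mean_deg \<le> real n - 1"
proof -
  have "AE \<theta> in F. real (\<delta> \<theta>) \<le> real n - 1"
    using AE_S by eventually_elim (rule real_delta_le)
  then have "mean_deg \<le> expectation (\<lambda>\<theta>. real n - 1)"
    using integrable_moments(1) by (intro integral_mono_AE) auto
  then show ?thesis
    by (simp add: prob_space)
qed

lemma mean_deg_sq_le: "mean_deg_sq \<le> (real n - 1) * mean_deg"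
proof -
  have "AE \<theta> in F. (real (\<delta> \<theta>))\<^sup>2 \<le> (real n - 1) * real (\<delta> \<theta>)"
    using AE_S by eventually_elim (simp add: power2_eq_square real_delta_le mult_right_mono)
  then have "mean_deg_sq \<le> expectation (\<lambda>\<theta>. (real n - 1) * real (\<delta> \<theta>))"
    using integrable_moments by (intro integral_mono_AE) auto
  then show ?thesis
    by simp
qed

lemma friend_denominator_pos: "0 < c * mean_deg - a * mean_deg_sq"
proof -
  have "a * mean_deg_sq \<le> a * (real n - 1) * mean_deg"
    using mean_deg_sq_le a_pos by (simp add: mult.assoc)
  moreover have "a * (real n - 1) * mean_deg < c * mean_deg"
    using c_gt mean_deg_pos by simp
  ultimately show ?thesis
    by simp
qed

lemma society_denominator_pos: "0 < c - a * mean_deg"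
proof -
  have "a * mean_deg \<le> a * (real n - 1)"
    using mean_deg_le a_pos by (intro mult_left_mono) auto
  then show ?thesis
    using c_gt by linarith
qed

abbreviation "deg_law \<equiv> distr F (count_space UNIV) \<delta>"

lemma pair_prob_space_deg_law: "pair_prob_space F deg_law"
  by (simp add: pair_prob_space_def pair_sigma_finite_def prob_space_axioms
      prob_space_distr prob_space_imp_sigma_finite)

lemma AE_deg_law: "AE d in deg_law. d \<le> n - 1"
proof -
  have "AE \<theta> in F. \<delta> \<theta> \<le> n - 1"
    using AE_S by eventually_elim (rule delta_le)
  then show ?thesis
    by (subst AE_distr_iff) auto
qed

lemma AE_Q_perp: "AE p in Q_perp F \<delta>. fst p \<in> S \<and> snd p \<le> n - 1"
proof -
  interpret FD: pair_prob_space F deg_law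
    by (rule pair_prob_space_deg_law)
  have "S \<in> sets F"
    using compact_imp_closed[OF compact_S] sets_F by simp
  then have "{p \<in> space (F \<Otimes>\<^sub>M deg_law). fst p \<in> S \<and> snd p \<le> n - 1} \<in> sets (F \<Otimes>\<^sub>M deg_law)"
    by measurable
  moreover have "AE \<theta> in F. AE d in deg_law. \<theta> \<in> S \<and> d \<le> n - 1"
    using AE_S by eventually_elim (use AE_deg_law in \<open>auto elim: AE_mp\<close>)
  ultimately show ?thesis
    using FD.AE_pair_iff[where P = "\<lambda>\<theta> d. \<theta> \<in> S \<and> d \<le> n - 1"] by (simp only: Q_perp_def)
qed

lemma integral_Q_perp_mult:
  fixes f :: "real \<Rightarrow> real" and g :: "nat \<Rightarrow> real"
  assumes "f \<in> borel_measurable borel" and f_bound: "\<And>\<theta>. \<theta> \<in> S \<Longrightarrow> \<bar>f \<theta>\<bar> \<le> B"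
  shows "integrable (Q_perp F \<delta>) (\<lambda>p. f (fst p) * g (snd p))"
    and "(\<integral>p. f (fst p) * g (snd p) \<partial>Q_perp F \<delta>) = expectation f * expectation (\<lambda>\<theta>. g (\<delta> \<theta>))"
proof -
  interpret FD: pair_prob_space F deg_law
    by (rule pair_prob_space_deg_law)
  have "f \<in> borel_measurable F"
    using assms(1) measurable_cong_sets[OF sets_F refl] by simp
  moreover have "AE \<theta> in F. \<bar>f \<theta>\<bar> \<le> B"
    using AE_S f_bound by (auto elim: AE_mp)
  moreover have "AE d in deg_law. \<bar>g d\<bar> \<le> (\<Sum>d'\<le>n - 1. \<bar>g d'\<bar>)"
    using AE_deg_law by eventually_elim (rule member_le_sum[of _ _ "\<lambda>d'. \<bar>g d'\<bar>"], auto)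
  ultimately show "integrable (Q_perp F \<delta>) (\<lambda>p. f (fst p) * g (snd p))"
    and "(\<integral>p. f (fst p) * g (snd p) \<partial>Q_perp F \<delta>) = expectation f * expectation (\<lambda>\<theta>. g (\<delta> \<theta>))"
    using FD.integral_mult_fst_snd[of f g] by (simp_all add: Q_perp_def integral_distr)
qed

lemma integral_Q_perp_closed_form:
  fixes w :: "nat \<Rightarrow> real"
  assumes meas: "(\<lambda>p. z (fst p) (snd p)) \<in> borel_measurable (Q_perp F \<delta>)"
    and z_eq: "\<And>\<theta> d. \<theta> \<in> S \<Longrightarrow> d \<le> n - 1 \<Longrightarrow> z \<theta> d = (\<theta> + a * real d * G) / c"
  shows "c * (\<integral>p. w (snd p) * z (fst p) (snd p) \<partial>Q_perp F \<delta>)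
    = mean_type * expectation (\<lambda>\<theta>. w (\<delta> \<theta>)) + a * G * expectation (\<lambda>\<theta>. w (\<delta> \<theta>) * real (\<delta> \<theta>))"
proof -
  obtain B where B: "\<And>\<theta>. \<theta> \<in> S \<Longrightarrow> \<bar>\<theta>\<bar> \<le> B"
    using type_bounded by blast
  note type_part = integral_Q_perp_mult[of "\<lambda>\<theta>. \<theta>", OF _ B, of w]
  note degree_part = integral_Q_perp_mult[of "\<lambda>_. 1" 1 "\<lambda>d. w d * real d"]
  define g where "g = (\<lambda>p. 1/c * (fst p * w (snd p)) + a * G / c * (1 * (w (snd p) * real (snd p))))"
  have "AE p in Q_perp F \<delta>. w (snd p) * z (fst p) (snd p) = g p"
    using AE_Q_perp by eventually_elim (use c_pos in \<open>simp add: z_eq g_def field_simps\<close>)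
  moreover have "(\<lambda>p. w (snd p)) \<in> borel_measurable (Q_perp F \<delta>)"
    unfolding Q_perp_def by (rule measurable_compose[OF measurable_snd]) simp
  ultimately have "(\<integral>p. w (snd p) * z (fst p) (snd p) \<partial>Q_perp F \<delta>) = (\<integral>p. g p \<partial>Q_perp F \<delta>)"
    using type_part(1) degree_part(1) meas
    by (intro integral_cong_AE) (auto simp: g_def Q_perp_def intro: borel_measurable_integrable)
  also have "\<dots> = 1/c * (mean_type * expectation (\<lambda>\<theta>. w (\<delta> \<theta>)))
      + a * G / c * expectation (\<lambda>\<theta>. w (\<delta> \<theta>) * real (\<delta> \<theta>))"
    using type_part degree_part by (simp add: g_def prob_space)
  finally show ?thesis
    using c_pos by (simp add: field_simps)
qed

abbreviation "friend_aggregate \<equiv> mean_type * mean_deg / (c * mean_deg - a * mean_deg_sq)"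
abbreviation "society_aggregate \<equiv> mean_type / (c - a * mean_deg)"

lemma friend_eq_Q_perp_closed_form:
  assumes "friend_eq n a c S (Q_perp F \<delta>) z" "\<theta> \<in> S" "d \<le> n - 1"
  shows "z \<theta> d = (\<theta> + a * real d * friend_aggregate) / c"
proof -
  define G where "G = Q_nbr_exp (Q_perp F \<delta>) (\<lambda>p. z (fst p) (snd p))"
  have eq: "comp_eq n a c S (Q_perp F \<delta>) (Q_nbr_exp (Q_perp F \<delta>)) z"
    using assms(1) by (simp add: friend_eq_def)
  then have meas: "(\<lambda>p. z (fst p) (snd p)) \<in> borel_measurable (Q_perp F \<delta>)"
    and nonneg: "\<And>\<theta> d. \<theta> \<in> S \<Longrightarrow> d \<le> n - 1 \<Longrightarrow> 0 \<le> z \<theta> d"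
    by (simp_all add: comp_eq_def)
  have denominator: "(\<integral>p. real (snd p) \<partial>Q_perp F \<delta>) = mean_deg"
    using integral_Q_perp_mult(2)[of "\<lambda>_. 1" 1 real] by (simp add: prob_space)
  have "AE p in Q_perp F \<delta>. 0 \<le> real (snd p) * z (fst p) (snd p)"
    using AE_Q_perp by eventually_elim (simp add: nonneg)
  then have "0 \<le> (\<integral>p. real (snd p) * z (fst p) (snd p) \<partial>Q_perp F \<delta>)"
    by (rule integral_nonneg_AE)
  then have "0 \<le> G"
    using mean_deg_pos by (simp add: G_def Q_nbr_exp_def denominator)
  then have z_eq: "\<And>\<theta> d. \<theta> \<in> S \<Longrightarrow> d \<le> n - 1 \<Longrightarrow> z \<theta> d = (\<theta> + a * real d * G) / c"
    using comp_eq_closed_form[OF eq c_pos _ S_nonneg G_def] a_pos by simp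
  have "c * (G * mean_deg) = mean_type * mean_deg + a * G * mean_deg_sq"
    using integral_Q_perp_closed_form[OF meas z_eq, of real] mean_deg_pos
    by (simp add: G_def Q_nbr_exp_def denominator power2_eq_square)
  then have "G * (c * mean_deg - a * mean_deg_sq) = mean_type * mean_deg"
    by (simp add: algebra_simps)
  then have "G = friend_aggregate"
    using friend_denominator_pos by (simp add: eq_divide_eq)
  then show ?thesis
    using z_eq assms(2,3) by simp
qed

lemma soc_eq_Q_perp_closed_form:
  assumes "soc_eq n a c S (Q_perp F \<delta>) z" "\<theta> \<in> S" "d \<le> n - 1"
  shows "z \<theta> d = (\<theta> + a * real d * society_aggregate) / c"
proof -
  define G where "G = Q_exp (Q_perp F \<delta>) (\<lambda>p. z (fst p) (snd p))"
  have eq: "comp_eq n a c S (Q_perp F \<delta>) (Q_exp (Q_perp F \<delta>)) z"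
    using assms(1) by (simp add: soc_eq_def)
  then have meas: "(\<lambda>p. z (fst p) (snd p)) \<in> borel_measurable (Q_perp F \<delta>)"
    and nonneg: "\<And>\<theta> d. \<theta> \<in> S \<Longrightarrow> d \<le> n - 1 \<Longrightarrow> 0 \<le> z \<theta> d"
    by (simp_all add: comp_eq_def)
  have "AE p in Q_perp F \<delta>. 0 \<le> z (fst p) (snd p)"
    using AE_Q_perp by eventually_elim (simp add: nonneg)
  then have "0 \<le> G"
    unfolding G_def Q_exp_def by (rule integral_nonneg_AE)
  then have z_eq: "\<And>\<theta> d. \<theta> \<in> S \<Longrightarrow> d \<le> n - 1 \<Longrightarrow> z \<theta> d = (\<theta> + a * real d * G) / c"
    using comp_eq_closed_form[OF eq c_pos _ S_nonneg G_def] a_pos by simp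
  have "c * G = mean_type + a * G * mean_deg"
    using integral_Q_perp_closed_form[OF meas z_eq, of "\<lambda>_. 1"] by (simp add: G_def Q_exp_def prob_space)
  then have "G * (c - a * mean_deg) = mean_type"
    by (simp add: algebra_simps)
  then have "G = society_aggregate"
    using society_denominator_pos by (simp add: eq_divide_eq)
  then show ?thesis
    using z_eq assms(2,3) by simp
qed

lemma integral_Q_end:
  fixes h :: "real \<times> nat \<Rightarrow> real"
  assumes "h \<in> borel_measurable (Q_end F \<delta>)"
  shows "(\<integral>p. h p \<partial>Q_end F \<delta>) = expectation (\<lambda>\<theta>. h (\<theta>, \<delta> \<theta>))"
    and "(\<lambda>\<theta>. h (\<theta>, \<delta> \<theta>)) \<in> borel_measurable F"
proof -
  have T: "(\<lambda>\<theta>. (\<theta>, \<delta> \<theta>)) \<in> measurable F (borel \<Otimes>\<^sub>M count_space UNIV)"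
    by measurable
  moreover have h: "h \<in> borel_measurable (borel \<Otimes>\<^sub>M count_space UNIV)"
    using assms unfolding Q_end_def by simp
  ultimately show "(\<integral>p. h p \<partial>Q_end F \<delta>) = expectation (\<lambda>\<theta>. h (\<theta>, \<delta> \<theta>))"
    and "(\<lambda>\<theta>. h (\<theta>, \<delta> \<theta>)) \<in> borel_measurable F"
    using measurable_compose[OF T h] integral_distr[OF T h] by (simp_all add: Q_end_def)
qed

lemma soc_eq_Q_end_closed_form:
  assumes "soc_eq n a c S (Q_end F \<delta>) z" "\<theta> \<in> S" "d \<le> n - 1"
  shows "z \<theta> d = (\<theta> + a * real d * society_aggregate) / c"
proof -
  define G where "G = Q_exp (Q_end F \<delta>) (\<lambda>p. z (fst p) (snd p))"
  have eq: "comp_eq n a c S (Q_end F \<delta>) (Q_exp (Q_end F \<delta>)) z"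
    using assms(1) by (simp add: soc_eq_def)
  then have "(\<lambda>p. z (fst p) (snd p)) \<in> borel_measurable (Q_end F \<delta>)"
    and nonneg: "\<And>\<theta> d. \<theta> \<in> S \<Longrightarrow> d \<le> n - 1 \<Longrightarrow> 0 \<le> z \<theta> d"
    by (simp_all add: comp_eq_def)
  from integral_Q_end[OF this(1)]
  have G_eq: "G = expectation (\<lambda>\<theta>. z \<theta> (\<delta> \<theta>))"
    and meas: "(\<lambda>\<theta>. z \<theta> (\<delta> \<theta>)) \<in> borel_measurable F"
    by (simp_all add: G_def Q_exp_def)
  have "AE \<theta> in F. 0 \<le> z \<theta> (\<delta> \<theta>)"
    using AE_S by eventually_elim (intro nonneg delta_le)
  then have "0 \<le> G"
    unfolding G_eq by (rule integral_nonneg_AE)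
  then have z_eq: "\<And>\<theta> d. \<theta> \<in> S \<Longrightarrow> d \<le> n - 1 \<Longrightarrow> z \<theta> d = (\<theta> + a * real d * G) / c"
    using comp_eq_closed_form[OF eq c_pos _ S_nonneg G_def] a_pos by simp
  have "AE \<theta> in F. z \<theta> (\<delta> \<theta>) = 1/c * \<theta> + a * G / c * real (\<delta> \<theta>)"
    using AE_S by eventually_elim (use c_pos in \<open>simp add: z_eq[OF _ delta_le] field_simps\<close>)
  then have "G = expectation (\<lambda>\<theta>. 1/c * \<theta> + a * G / c * real (\<delta> \<theta>))"
    unfolding G_eq using meas by (intro integral_cong_AE) auto
  also have "\<dots> = 1/c * mean_type + a * G / c * mean_deg"
    using integrable_moments by simp
  finally have "G * (c - a * mean_deg) = mean_type"
    using c_pos by (simp add: field_simps)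
  then have "G = society_aggregate"
    using society_denominator_pos by (simp add: eq_divide_eq)
  then show ?thesis
    using z_eq assms(2,3) by simp
qed

lemma society_aggregate_lt_friend_aggregate: "society_aggregate < friend_aggregate"
proof -
  have "a * mean_deg\<^sup>2 < a * mean_deg_sq"
    using mean_deg_sq_gt a_pos by simp
  then have "c * mean_deg - a * mean_deg_sq < mean_deg * (c - a * mean_deg)"
    by (simp add: power2_eq_square algebra_simps)
  then have "mean_type * (c * mean_deg - a * mean_deg_sq) < mean_type * mean_deg * (c - a * mean_deg)"
    using mean_type_pos by (simp add: mult.assoc)
  then show ?thesis
    using friend_denominator_pos society_denominator_pos by (simp add: field_simps)
qed

lemma best_response_strict_mono:
  "0 < d \<Longrightarrow> G1 < G2 \<Longrightarrow> (\<theta> + a * real d * G1) / c < (\<theta> + a * real d * G2) / c"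
  using a_pos c_pos by (simp add: divide_strict_right_mono)

lemma friend_aggregate_lt_nbr_action: "friend_aggregate < nbr_action"
proof -
  have "nbr_action = mean_deg_type / (c * mean_deg - a * mean_deg_sq)"
    using nbr_action_eq friend_denominator_pos by (simp add: eq_divide_eq)
  then show ?thesis
    using mean_deg_type_gt friend_denominator_pos by (simp add: divide_strict_right_mono mult.commute)
qed

end

theorem proposition4:
  fixes n :: nat and a \<phi> c k :: real and F :: "real measure" and S :: "real set"
    and \<delta> :: "real \<Rightarrow> nat" and \<xi> :: "real \<Rightarrow> real"
    and x_friend_perp x_soc_end x_soc_perp :: "real \<Rightarrow> nat \<Rightarrow> real"
  assumes "n \<ge> 2" and "a > 0" and "c > a * (real n - 1)" and "k > a * (real n - 1)"
    and "prob_space F" and "sets F = sets borel"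
    and "\<forall>x. measure F {x} = 0"
    and "S = measure_support F" and "compact S" and "S \<subseteq> {0..}"
    and "endo_friend_eq n a c k \<phi> F S \<delta> \<xi>"
    and "two_degrees F \<delta>"
    and "friend_eq n a c S (Q_perp F \<delta>) x_friend_perp"
    and "soc_eq n a c S (Q_end F \<delta>) x_soc_end"
    and "soc_eq n a c S (Q_perp F \<delta>) x_soc_perp"
  shows "(\<forall>\<theta>1\<in>S. \<forall>\<theta>2\<in>S. \<theta>1 \<le> \<theta>2 \<longrightarrow> \<delta> \<theta>1 \<le> \<delta> \<theta>2) \<and>
         (\<forall>\<theta>\<in>S. \<delta> \<theta> > 0 \<longrightarrow>
            \<xi> \<theta> > x_friend_perp \<theta> (\<delta> \<theta>) \<and>
            x_friend_perp \<theta> (\<delta> \<theta>) > x_soc_end \<theta> (\<delta> \<theta>) \<and>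
            x_soc_end \<theta> (\<delta> \<theta>) = x_soc_perp \<theta> (\<delta> \<theta>))"
proof -
  have "0 < a * (real n - 1)"
    using assms(1,2) by simp
  with assms(4) have "0 < k"
    by linarith
  with assms interpret endo_equilibrium F n a c k \<phi> S \<delta> \<xi>
    by (simp add: endo_equilibrium_def endo_equilibrium_axioms_def)
  have "\<xi> \<theta> > x_friend_perp \<theta> (\<delta> \<theta>) \<and> x_friend_perp \<theta> (\<delta> \<theta>) > x_soc_end \<theta> (\<delta> \<theta>)
      \<and> x_soc_end \<theta> (\<delta> \<theta>) = x_soc_perp \<theta> (\<delta> \<theta>)" if "\<theta> \<in> S" "0 < \<delta> \<theta>" for \<theta>
    using best_response_strict_mono[OF that(2) friend_aggregate_lt_nbr_action]
      best_response_strict_mono[OF that(2) society_aggregate_lt_friend_aggregate]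
    unfolding xi_eq[OF that(1)]
      friend_eq_Q_perp_closed_form[OF assms(13) that(1) delta_le[OF that(1)]]
      soc_eq_Q_end_closed_form[OF assms(14) that(1) delta_le[OF that(1)]]
      soc_eq_Q_perp_closed_form[OF assms(15) that(1) delta_le[OF that(1)]]
    by blast
  with delta_mono show ?thesis
    unfolding mono_on_def monotone_on_def by blast
qed

end
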